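(* Let $1\leq a\leq n$ be integers and let $p(n)$ denote the number of partitions of $n$ (the number of integer sequences $\lambda_1\geq\lambda_2\geq\dots\geq\lambda_k\geq 1$ with $\sum_{i=1}^k\lambda_i=n$). There exists a family $\mathcal{S}\subseteq 2^{[n]}$ of subsets of $[n]=\{1,\dots,n\}$ with $|\mathcal{S}|\leq p(n)\,a\,(n/a+1)^a$ such that the poset $(\mathcal{S},\subseteq)$ contains every $n$-element poset that does not have an antichain of size $a+1$.
   Context: A poset $(U,\leq)$ contains a poset $(P,\preceq)$ if there is a subset $P'\subseteq U$ such that $(P',\leq)$ (the restriction of $\leq$ to $P'$) is isomorphic to $(P,\preceq)$; i.e. containment is as an induced subposet. An antichain is a set of pairwise incomparable elements. *)

theory Defs
  imports Complex_Main
begin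

definition partition_count :: "nat \<Rightarrow> nat" where
  "partition_count n = card {xs :: nat list. sorted_wrt (\<ge>) xs \<and> (\<forall>x\<in>set xs. 1 \<le> x) \<and> sum_list xs = n}"

definition is_antichain :: "'a set \<Rightarrow> ('a \<times> 'a) set \<Rightarrow> 'a set \<Rightarrow> bool" where
  "is_antichain P r A \<longleftrightarrow> A \<subseteq> P \<and>
     (\<forall>x\<in>A. \<forall>y\<in>A. x \<noteq> y \<longrightarrow> (x, y) \<notin> r \<and> (y, x) \<notin> r)"

definition contains_poset :: "'b set set \<Rightarrow> 'a set \<Rightarrow> ('a \<times> 'a) set \<Rightarrow> bool" where
  "contains_poset U P r \<longleftrightarrow> (\<exists>f. inj_on f P \<and> f ` P \<subseteq> U \<and>
     (\<forall>x\<in>P. \<forall>y\<in>P. (x, y) \<in> r \<longleftrightarrow> f x \<subseteq> f y))"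

end

theory Submission
  imports Defs "HOL-Library.Disjoint_Sets" "HOL-Analysis.Convex"
begin

(* By Dilworth's theorem a poset P of width at most a is the disjoint union of at most a chains
   C_1, ..., C_k, whose sizes, sorted decreasingly, form a partition of n = |P| into at most a
   parts. Cut {1..n} into consecutive blocks of these sizes and send x to the union over i of the
   initial segment of the i-th block of length |{z in C_i. z <= x}|. Within a chain these
   down-sets are nested, so x <= y iff each count for x is at most the corresponding count for y
   iff the image of x is contained in that of y. All images lie in the family of unions of
   initial segments of the blocks, which has prod (lambda_i + 1) <= (n/a + 1)^a members by AM-GM;
   the union of these families over all partitions with at most a parts works, even without the
   factor a of the bound.

   Dilworth's theorem is proved by Galvin's induction on |P|: for a maximal element m and a chain
   partition of P - {m}, either P - {m} has smaller width, or m lies above the greatest element t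
   of some chain C that lies on a maximum antichain, and then removing the chain of m and the
   elements of C below t lowers the width. *)

lemma antichain_subset: "is_antichain P r A \<Longrightarrow> B \<subseteq> A \<Longrightarrow> is_antichain P r B"
  unfolding is_antichain_def by blast

lemma antichain_mono: "is_antichain P r A \<Longrightarrow> P \<subseteq> P' \<Longrightarrow> is_antichain P' r A"
  unfolding is_antichain_def by blast

lemma antichain_insert:
  "is_antichain P r (insert x A) \<longleftrightarrow>
     is_antichain P r A \<and> x \<in> P \<and> (\<forall>y\<in>A. y \<noteq> x \<longrightarrow> (x, y) \<notin> r \<and> (y, x) \<notin> r)"
  unfolding is_antichain_def by auto

lemma antichains_card_le_iff:
  "(\<forall>A. is_antichain P r A \<longrightarrow> card A \<le> k) \<longleftrightarrow> \<not> (\<exists>A. is_antichain P r A \<and> card A = Suc k)"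
proof
  assume none: "\<not> (\<exists>A. is_antichain P r A \<and> card A = Suc k)"
  show "\<forall>A. is_antichain P r A \<longrightarrow> card A \<le> k"
  proof (intro allI impI)
    fix A assume A: "is_antichain P r A"
    show "card A \<le> k"
    proof (rule ccontr)
      assume "\<not> card A \<le> k"
      then obtain B where "B \<subseteq> A" and "card B = Suc k"
        using obtain_subset_with_card_n[of "Suc k" A] by auto
      with none A show False using antichain_subset by blast
    qed
  qed
next
  assume "\<forall>A. is_antichain P r A \<longrightarrow> card A \<le> k"
  then show "\<not> (\<exists>A. is_antichain P r A \<and> card A = Suc k)" by fastforce
qed

lemma card_antichain_Int_chain_le_1:
  assumes "is_antichain P r A" and "C \<in> Chains r"
  shows "card (A \<inter> C) \<le> 1"
proof (cases "finite (A \<inter> C)")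
  case True
  have "\<forall>x\<in>A \<inter> C. \<forall>y\<in>A \<inter> C. x = y"
    using assms unfolding is_antichain_def Chains_def by blast
  then show ?thesis by (simp add: card_le_Suc0_iff_eq True)
qed simp

lemma card_eq_sum_card_Int_partition:
  assumes "partition_on P CC" and "finite P" and "A \<subseteq> P"
  shows "card A = (\<Sum>C\<in>CC. card (A \<inter> C))"
proof -
  have "A = (\<Union>C\<in>CC. A \<inter> C)" using partition_onD1[OF assms(1)] assms(3) by blast
  also have "card \<dots> = (\<Sum>C\<in>CC. card (A \<inter> C))"
  proof (rule card_UN_disjoint)
    show "finite CC" using assms(1,2) by (rule finite_elements[rotated])
    show "\<forall>C\<in>CC. finite (A \<inter> C)" using assms(2,3) by (auto intro: finite_subset)
    show "\<forall>C\<in>CC. \<forall>D\<in>CC. C \<noteq> D \<longrightarrow> A \<inter> C \<inter> (A \<inter> D) = {}"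
      using partition_onD2[OF assms(1)] by (auto simp: pairwise_def disjnt_def)
  qed
  finally show ?thesis .
qed

lemma card_antichain_le_chain_partition:
  assumes "is_antichain P r A" and "partition_on P CC" and "CC \<subseteq> Chains r" and "finite P"
  shows "card A \<le> card CC"
proof -
  have "card A = (\<Sum>C\<in>CC. card (A \<inter> C))"
    using assms by (intro card_eq_sum_card_Int_partition) (auto simp: is_antichain_def)
  also have "\<dots> \<le> (\<Sum>C\<in>CC. 1)"
    using assms(1,3) card_antichain_Int_chain_le_1 by (intro sum_mono) blast
  finally show ?thesis by simp
qed

lemma antichain_meets_chain_partition:
  assumes "is_antichain P r A" and "partition_on P CC" and "CC \<subseteq> Chains r" and "finite P"
    and "card CC \<le> card A" and "C \<in> CC"
  shows "\<exists>x. A \<inter> C = {x}"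
proof -
  have le1: "card (A \<inter> D) \<le> 1" if "D \<in> CC" for D
    using assms(1,3) card_antichain_Int_chain_le_1 that by blast
  have "card (A \<inter> C) = 1"
  proof (rule ccontr)
    assume "card (A \<inter> C) \<noteq> 1"
    with le1[OF assms(6)] have "card (A \<inter> C) < 1" by simp
    have "card A = (\<Sum>D\<in>CC. card (A \<inter> D))"
      using assms by (intro card_eq_sum_card_Int_partition) (auto simp: is_antichain_def)
    also have "\<dots> < (\<Sum>D\<in>CC. 1)"
      using assms(2,4,6) le1 \<open>card (A \<inter> C) < 1\<close> finite_elements by (intro sum_strict_mono_ex1) auto
    finally show False using assms(5) by simp
  qed
  then show ?thesis by (rule card_1_singletonE) blast
qed

lemma finite_partition_member: "finite P \<Longrightarrow> partition_on P CC \<Longrightarrow> C \<in> CC \<Longrightarrow> finite C"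
  using partition_onD1 by (metis Union_upper finite_subset)

section \<open>Dilworth's theorem\<close>

text \<open>\<open>t C\<close> is the greatest element of the chain \<open>C\<close> lying on an antichain of size \<open>card CC\<close>,
  i.e. on a maximum antichain when \<open>CC\<close> is a minimum chain partition.\<close>
definition chain_tops :: "'a set \<Rightarrow> 'a rel \<Rightarrow> 'a set set \<Rightarrow> ('a set \<Rightarrow> 'a) \<Rightarrow> bool" where
  "chain_tops P r CC t \<longleftrightarrow>
     (\<forall>C\<in>CC. (\<exists>A. is_antichain P r A \<and> card A = card CC \<and> t C \<in> A \<inter> C) \<and>
       (\<forall>A. is_antichain P r A \<and> card A = card CC \<longrightarrow> (\<forall>y\<in>A \<inter> C. (y, t C) \<in> r)))"

lemma chain_tops_mem: "chain_tops P r CC t \<Longrightarrow> C \<in> CC \<Longrightarrow> t C \<in> C"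
  unfolding chain_tops_def by blast

lemma card_antichain_avoiding_below_top_less:
  assumes "finite P" and CC: "partition_on P CC" "CC \<subseteq> Chains r" and t: "chain_tops P r CC t"
    and "C \<in> CC" and B: "is_antichain P r B" and avoid: "B \<inter> C \<inter> under r (t C) = {}"
  shows "card B < card CC"
proof (rule ccontr)
  assume "\<not> card B < card CC"
  then obtain B' where "B' \<subseteq> B" and B'_card: "card B' = card CC"
    using obtain_subset_with_card_n[of "card CC" B] by (auto simp: not_less)
  then have B': "is_antichain P r B'" using antichain_subset B by blast
  then obtain y where "B' \<inter> C = {y}"
    using antichain_meets_chain_partition[OF B' CC assms(1)] B'_card \<open>C \<in> CC\<close> by auto
  moreover from this have "(y, t C) \<in> r"
    using t \<open>C \<in> CC\<close> B' B'_card unfolding chain_tops_def by blast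
  ultimately show False using \<open>B' \<subseteq> B\<close> avoid unfolding under_def by blast
qed

context
  fixes Q :: "'a set" and r :: "'a rel"
  assumes po: "partial_order_on Q r"
begin

lemma finite_has_maximal_wrt:
  assumes "finite X" and "X \<noteq> {}"
  shows "\<exists>m\<in>X. \<forall>y\<in>X. (m, y) \<in> r \<longrightarrow> y = m"
proof -
  have "trans r" and "antisym r" using po by (auto dest: partial_order_onD)
  then have asym: "asymp_on X (\<lambda>x y. (x, y) \<in> r \<and> x \<noteq> y)"
    and trans: "transp_on X (\<lambda>x y. (x, y) \<in> r \<and> x \<noteq> y)"
    by (auto simp: asymp_on_def transp_on_def dest: antisymD transD)
  obtain m where "m \<in> X" and "\<forall>y\<in>X. y \<noteq> m \<longrightarrow> \<not> ((m, y) \<in> r \<and> m \<noteq> y)"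
    using Finite_Set.bex_max_element[OF assms(1) asym trans assms(2)] by blast
  then show ?thesis by blast
qed

lemma finite_chain_has_greatest:
  assumes "finite X" and "X \<noteq> {}" and "X \<subseteq> Q" and "X \<in> Chains r"
  shows "\<exists>g\<in>X. \<forall>y\<in>X. (y, g) \<in> r"
proof -
  obtain g where g: "g \<in> X" "\<forall>y\<in>X. (g, y) \<in> r \<longrightarrow> y = g"
    using finite_has_maximal_wrt[OF assms(1,2)] by blast
  have "refl_on Q r" using po by (auto dest: partial_order_onD)
  then have "\<forall>y\<in>X. (y, g) \<in> r"
    using g assms(3,4) unfolding Chains_def refl_on_def by blast
  then show ?thesis using g(1) by blast
qed

lemma exists_chain_tops:
  assumes "finite P" and "P \<subseteq> Q" and CC: "partition_on P CC" "CC \<subseteq> Chains r"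
    and A0: "is_antichain P r A0" "card A0 = card CC"
  shows "\<exists>t. chain_tops P r CC t"
proof -
  have "\<exists>g. (\<exists>A. is_antichain P r A \<and> card A = card CC \<and> g \<in> A \<inter> C) \<and>
      (\<forall>A. is_antichain P r A \<and> card A = card CC \<longrightarrow> (\<forall>y\<in>A \<inter> C. (y, g) \<in> r))"
    if C: "C \<in> CC" for C
  proof -
    define X where "X = C \<inter> \<Union>{A. is_antichain P r A \<and> card A = card CC}"
    have "C \<subseteq> P" using partition_onD1[OF CC(1)] C by blast
    obtain x where "A0 \<inter> C = {x}"
      using antichain_meets_chain_partition[OF A0(1) CC assms(1)] A0(2) C by auto
    then have "X \<noteq> {}" using A0 unfolding X_def by blast
    moreover have "finite X" and "X \<subseteq> Q" using assms(1,2) \<open>C \<subseteq> P\<close> unfolding X_def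
      by (auto intro: finite_subset)
    moreover have "X \<in> Chains r" using CC(2) C unfolding X_def Chains_def by blast
    ultimately obtain g where "g \<in> X" and "\<forall>y\<in>X. (y, g) \<in> r"
      using finite_chain_has_greatest by blast
    then show ?thesis unfolding X_def by blast
  qed
  then show ?thesis unfolding chain_tops_def by metis
qed

lemma chain_tops_antichain:
  assumes CC: "partition_on P CC" "CC \<subseteq> Chains r" and "finite P" and t: "chain_tops P r CC t"
  shows "inj_on t CC" and "is_antichain P r (t ` CC)"
proof -
  note t_mem = chain_tops_mem[OF t]
  have disj: "C = D" if "C \<in> CC" "D \<in> CC" "x \<in> C" "x \<in> D" for C D x
    using partition_onD2[OF CC(1)] that unfolding pairwise_def disjnt_def by blast
  show "inj_on t CC" using t_mem disj by (intro inj_onI) metis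
  have "(t C, t D) \<notin> r" if C: "C \<in> CC" and D: "D \<in> CC" and "C \<noteq> D" for C D
  proof
    assume "(t C, t D) \<in> r"
    obtain B where B: "is_antichain P r B" "card B = card CC" "t D \<in> B"
      using t D unfolding chain_tops_def by blast
    then obtain y where "B \<inter> C = {y}"
      using antichain_meets_chain_partition[OF B(1) CC assms(3)] C by auto
    then have "(y, t C) \<in> r" and "y \<in> C" and "y \<in> B"
      using t C B(1,2) unfolding chain_tops_def by blast+
    with \<open>(t C, t D) \<in> r\<close> have "(y, t D) \<in> r"
      using po by (auto dest: partial_order_onD transD)
    moreover have "y \<noteq> t D" using disj[OF C D] t_mem[OF D] \<open>y \<in> C\<close> \<open>C \<noteq> D\<close> by blast
    ultimately show False using B(1,3) \<open>y \<in> B\<close> unfolding is_antichain_def by blast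
  qed
  moreover have "t ` CC \<subseteq> P" using t_mem partition_onD1[OF CC(1)] by blast
  ultimately show "is_antichain P r (t ` CC)" unfolding is_antichain_def by blast
qed

lemma maximal_above_chain_top:
  assumes "finite P" and m: "m \<in> P" "\<forall>y\<in>P. (m, y) \<in> r \<longrightarrow> y = m"
    and width: "\<forall>A. is_antichain P r A \<longrightarrow> card A \<le> card CC"
    and CC: "partition_on (P - {m}) CC" "CC \<subseteq> Chains r" and t: "chain_tops (P - {m}) r CC t"
  obtains C where "C \<in> CC" and "(t C, m) \<in> r"
proof -
  have fin: "finite (P - {m})" using assms(1) by simp
  note tops = chain_tops_antichain[OF CC fin t]
  have tops_in: "t C \<in> P - {m}" if "C \<in> CC" for C
    using chain_tops_mem[OF t that] that partition_onD1[OF CC(1)] by auto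
  have "card (insert m (t ` CC)) = Suc (card CC)"
    using tops(1) tops_in finite_elements[OF fin CC(1)] by (auto simp: card_insert_if card_image)
  then have "\<not> is_antichain P r (insert m (t ` CC))" using width by fastforce
  moreover have "is_antichain P r (insert m (t ` CC))"
    if "\<forall>C\<in>CC. (t C, m) \<notin> r \<and> (m, t C) \<notin> r"
    using that antichain_mono[OF tops(2) Diff_subset] m(1) by (auto simp: antichain_insert)
  ultimately obtain C where C: "C \<in> CC" and "(t C, m) \<in> r \<or> (m, t C) \<in> r"
    by blast
  moreover have "(m, t C) \<notin> r" using m(2) tops_in[OF C] by blast
  ultimately show ?thesis using that by blast
qed

lemma chain_through_maximal_reducing_width:
  assumes fin: "finite P" and "P \<subseteq> Q"
    and m: "m \<in> P" "\<forall>y\<in>P. (m, y) \<in> r \<longrightarrow> y = m"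
    and width: "\<forall>A. is_antichain P r A \<longrightarrow> card A \<le> k"
    and CC: "partition_on (P - {m}) CC" "CC \<subseteq> Chains r" "card CC \<le> k"
  obtains K where "m \<in> K" and "K \<subseteq> P" and "K \<in> Chains r"
    and "\<forall>A. is_antichain (P - K) r A \<longrightarrow> card A < k"
proof (cases "\<exists>A. is_antichain (P - {m}) r A \<and> card A = k")
  case False
  moreover have "\<forall>A. is_antichain (P - {m}) r A \<longrightarrow> card A \<le> k"
    using width antichain_mono by blast
  ultimately have "\<forall>A. is_antichain (P - {m}) r A \<longrightarrow> card A < k"
    using le_neq_implies_less by blast
  moreover have "{m} \<in> Chains r" using po m(1) \<open>P \<subseteq> Q\<close>
    by (auto simp: Chains_def dest: partial_order_onD refl_onD)
  ultimately show ?thesis using that m(1) by blast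
next
  case True
  then obtain A0 where A0: "is_antichain (P - {m}) r A0" "card A0 = k" by blast
  have fin': "finite (P - {m})" using fin by simp
  have "k \<le> card CC" using card_antichain_le_chain_partition[OF A0(1) CC(1,2) fin'] A0(2) by simp
  with CC(3) have k: "card CC = k" by simp
  have "P - {m} \<subseteq> Q" using \<open>P \<subseteq> Q\<close> by blast
  then obtain t where t: "chain_tops (P - {m}) r CC t"
    using exists_chain_tops[OF fin' _ CC(1,2) A0(1)] A0(2) k by auto
  obtain C where C: "C \<in> CC" and tm: "(t C, m) \<in> r"
    using maximal_above_chain_top[OF fin m _ CC(1,2) t] width k by blast
  define K where "K = insert m (C \<inter> under r (t C))"
  have "C \<subseteq> P" using C partition_onD1[OF CC(1)] by auto
  then have "K \<subseteq> P" using m(1) unfolding K_def by blast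
  moreover have "K \<in> Chains r"
  proof -
    have "C \<in> Chains r" using CC(2) C by blast
    moreover have "(m, m) \<in> r" using po m(1) \<open>P \<subseteq> Q\<close> by (auto dest: partial_order_onD refl_onD)
    moreover have "(z, m) \<in> r" if "z \<in> C \<inter> under r (t C)" for z
      using that tm po by (auto simp: under_def dest: partial_order_onD transD)
    ultimately show ?thesis unfolding K_def Chains_def by blast
  qed
  moreover have "card B < k" if B: "is_antichain (P - K) r B" for B
  proof -
    have "is_antichain (P - {m}) r B" by (rule antichain_mono[OF B]) (auto simp: K_def)
    moreover have "B \<inter> C \<inter> under r (t C) = {}" using B unfolding K_def is_antichain_def by blast
    ultimately show ?thesis
      using card_antichain_avoiding_below_top_less[OF fin' CC(1,2) t C] k by blast
  qed
  ultimately show ?thesis using that unfolding K_def by blast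
qed

theorem dilworth:
  assumes "finite P" and "P \<subseteq> Q" and "\<forall>A. is_antichain P r A \<longrightarrow> card A \<le> k"
  shows "\<exists>CC. partition_on P CC \<and> CC \<subseteq> Chains r \<and> card CC \<le> k"
  using assms
proof (induction "card P" arbitrary: P k rule: less_induct)
  case less
  show ?case
  proof (cases "P = {}")
    case True
    then show ?thesis by (auto simp: partition_on_empty)
  next
    case False
    then obtain m where m: "m \<in> P" "\<forall>y\<in>P. (m, y) \<in> r \<longrightarrow> y = m"
      using finite_has_maximal_wrt[OF less.prems(1)] by blast
    have "is_antichain P r {m}" using m(1) unfolding is_antichain_def by blast
    then have "0 < k" using less.prems(3) by fastforce
    have "\<forall>A. is_antichain (P - {m}) r A \<longrightarrow> card A \<le> k"
      using less.prems(3) antichain_mono by blast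
    moreover have "card (P - {m}) < card P" using less.prems(1) m(1) by (rule card_Diff1_less)
    ultimately obtain CC where "partition_on (P - {m}) CC" "CC \<subseteq> Chains r" "card CC \<le> k"
      using less.hyps less.prems(1,2) by blast
    then obtain K where K: "m \<in> K" "K \<subseteq> P" "K \<in> Chains r"
      and width: "\<forall>A. is_antichain (P - K) r A \<longrightarrow> card A < k"
      using chain_through_maximal_reducing_width[OF less.prems(1,2) m less.prems(3)] by blast
    have "\<forall>A. is_antichain (P - K) r A \<longrightarrow> card A \<le> k - 1" using width by fastforce
    moreover have "card (P - K) < card P"
      using less.prems(1) K(1,2) by (intro psubset_card_mono) auto
    ultimately obtain DD where DD: "partition_on (P - K) DD" "DD \<subseteq> Chains r" "card DD \<le> k - 1"
      using less.hyps less.prems(1,2) by blast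
    have "partition_on P (insert K DD)"
      using DD(1) K(1,2) partition_onD1[OF DD(1)] by (subst partition_on_insert) (auto simp: disjnt_def)
    moreover have "card (insert K DD) \<le> k"
      using DD(3) \<open>0 < k\<close> card_insert_le_m1[of k DD K] by simp
    ultimately show ?thesis using K(3) DD(2) by blast
  qed
qed

lemma chain_Int_under_nested:
  assumes "C \<in> Chains r"
  shows "C \<inter> under r x \<subseteq> C \<inter> under r y \<or> C \<inter> under r y \<subseteq> C \<inter> under r x"
proof -
  have "trans r" using po by (auto dest: partial_order_onD)
  then show ?thesis using assms unfolding Chains_def under_def by (blast dest: transD)
qed

lemma chain_partition_under_card_le_iff:
  assumes CC: "partition_on P CC" "CC \<subseteq> Chains r" and "finite P" and "P \<subseteq> Q"
    and x: "x \<in> P" and y: "y \<in> P"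
  shows "(\<forall>C\<in>CC. card (C \<inter> under r x) \<le> card (C \<inter> under r y)) \<longleftrightarrow> (x, y) \<in> r"
proof
  assume le: "\<forall>C\<in>CC. card (C \<inter> under r x) \<le> card (C \<inter> under r y)"
  obtain C where C: "C \<in> CC" "x \<in> C" using partition_onD1[OF CC(1)] x by blast
  have "C \<inter> under r x \<subseteq> C \<inter> under r y"
  proof (rule ccontr)
    assume "\<not> C \<inter> under r x \<subseteq> C \<inter> under r y"
    then have "C \<inter> under r y \<subset> C \<inter> under r x"
      using chain_Int_under_nested CC(2) C(1) by blast
    then have "card (C \<inter> under r y) < card (C \<inter> under r x)"
      using finite_partition_member[OF assms(3) CC(1) C(1)] by (meson finite_Int psubset_card_mono)
    then show False using le C(1) by (meson not_le)
  qed
  moreover have "x \<in> C \<inter> under r x"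
    using po C(2) x \<open>P \<subseteq> Q\<close> by (auto simp: under_def dest: partial_order_onD refl_onD)
  ultimately show "(x, y) \<in> r" unfolding under_def by blast
next
  assume "(x, y) \<in> r"
  then have "C \<inter> under r x \<subseteq> C \<inter> under r y" for C
    using po by (auto simp: under_def dest: partial_order_onD transD)
  with finite_partition_member[OF assms(3) CC(1)]
  show "\<forall>C\<in>CC. card (C \<inter> under r x) \<le> card (C \<inter> under r y)"
    by (meson card_mono finite_Int)
qed

end

section \<open>Coding a chain partition by blocks of integers\<close>

lemma contains_posetI:
  assumes "antisym r" and "f ` P \<subseteq> U" and "\<forall>x\<in>P. \<forall>y\<in>P. (x, y) \<in> r \<longleftrightarrow> f x \<subseteq> f y"
  shows "contains_poset U P r"
proof -
  have "inj_on f P" using assms(1,3) by (intro inj_onI) (auto dest: antisymD)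
  then show ?thesis unfolding contains_poset_def using assms(2,3) by blast
qed

text \<open>The unions of initial segments of the consecutive blocks of lengths \<open>ls\<close> that cut up
  \<open>{off<..off + sum_list ls}\<close>.\<close>
fun block_family :: "nat list \<Rightarrow> nat \<Rightarrow> nat set set" where
  "block_family [] off = {{}}"
| "block_family (l # ls) off =
     (\<lambda>(t, B). {off<..off + t} \<union> B) ` ({..l} \<times> block_family ls (off + l))"

lemma finite_block_family: "finite (block_family ls off)"
  by (induction ls arbitrary: off) auto

lemma card_block_family_le: "card (block_family ls off) \<le> (\<Prod>l\<leftarrow>ls. Suc l)"
proof (induction ls arbitrary: off)
  case (Cons l ls)
  have "card (block_family (l # ls) off) \<le> card ({..l} \<times> block_family ls (off + l))"
    unfolding block_family.simps by (rule card_image_le) (simp add: finite_block_family)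
  also have "\<dots> = Suc l * card (block_family ls (off + l))"
    by (simp add: card_cartesian_product)
  also have "\<dots> \<le> Suc l * (\<Prod>l\<leftarrow>ls. Suc l)"
    using Cons.IH by (rule mult_le_mono2)
  finally show ?case by simp
qed simp

lemma block_family_subset: "B \<in> block_family ls off \<Longrightarrow> B \<subseteq> {off<..off + sum_list ls}"
proof (induction ls arbitrary: off B)
  case (Cons l ls)
  then obtain t B' where "t \<le> l" "B' \<in> block_family ls (off + l)" "B = {off<..off + t} \<union> B'"
    by auto
  with Cons.IH show ?case by fastforce
qed simp

fun block_union :: "nat \<Rightarrow> nat list \<Rightarrow> nat list \<Rightarrow> nat set" where
  "block_union off (l # ls) (t # ts) = {off<..off + t} \<union> block_union (off + l) ls ts"
| "block_union off _ _ = {}"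

lemma block_union_in_block_family:
  "list_all2 (\<le>) ts ls \<Longrightarrow> block_union off ls ts \<in> block_family ls off"
  by (induction ts ls arbitrary: off rule: list_all2_induct) force+

lemma block_union_greater: "y \<in> block_union off ls ts \<Longrightarrow> off < y"
  by (induction off ls ts rule: block_union.induct) fastforce+

lemma block_union_subset_iff:
  "list_all2 (\<le>) ts ls \<Longrightarrow> list_all2 (\<le>) us ls \<Longrightarrow>
    block_union off ls ts \<subseteq> block_union off ls us \<longleftrightarrow> list_all2 (\<le>) ts us"
proof (induction ts ls arbitrary: off us rule: list_all2_induct)
  case (Cons t ts l ls)
  then obtain u us' where us: "us = u # us'" "u \<le> l" "list_all2 (\<le>) us' ls"
    by (auto simp: list_all2_Cons2)
  let ?R = "block_union (off + l) ls ts" and ?R' = "block_union (off + l) ls us'"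
  have "?R \<subseteq> {off + l<..}" and "?R' \<subseteq> {off + l<..}"
    using block_union_greater by blast+
  with Cons.hyps(1) us(2) have "{off<..off + t} \<union> ?R \<subseteq> {off<..off + u} \<union> ?R' \<longleftrightarrow>
      {off<..off + t} \<subseteq> {off<..off + u} \<and> ?R \<subseteq> ?R'"
    by force
  also have "{off<..off + t} \<subseteq> {off<..off + u} \<longleftrightarrow> t \<le> u"
    by (simp add: Ioc_subset_iff order_antisym)
  finally show ?case using Cons.IH[OF us(3)] us(1) by simp
qed simp

section \<open>The universal family\<close>

lemma prod_Suc_le_mean_power:
  assumes "length xs \<le> a" and "0 < a"
  shows "real (\<Prod>x\<leftarrow>xs. Suc x) \<le> (real (sum_list xs) / a + 1) ^ a"
proof -
  define ys where "ys = xs @ replicate (a - length xs) 0"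
  define y where "y i = real (Suc (ys ! i))" for i
  have len: "length ys = a" using assms(1) by (simp add: ys_def)
  have prod: "real (\<Prod>x\<leftarrow>xs. Suc x) = (\<Prod>i<a. y i)"
  proof -
    have "(\<Prod>x\<leftarrow>xs. Suc x) = (\<Prod>x\<leftarrow>ys. Suc x)" by (simp add: ys_def)
    also have "\<dots> = (\<Prod>i<a. Suc (ys ! i))"
      using len by (simp add: prod.list_conv_set_nth atLeast0LessThan)
    finally show ?thesis by (simp add: y_def)
  qed
  have sum: "(\<Sum>i<a. y i / a) = real (sum_list xs) / a + 1"
  proof -
    have "sum_list xs = sum_list ys" by (simp add: ys_def)
    also have "\<dots> = (\<Sum>i<a. ys ! i)" using len by (simp add: sum_list_sum_nth atLeast0LessThan)
    finally show ?thesis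
      using assms(2) by (simp add: y_def field_simps sum.distrib flip: sum_divide_distrib)
  qed
  have "(\<Prod>i<a. y i) powr (1 / a) \<le> real (sum_list xs) / a + 1"
    using arith_geom_mean[of "{..<a}" y] assms(2) sum by (simp add: y_def lessThan_empty_iff)
  moreover have "((\<Prod>i<a. y i) powr (1 / a)) ^ a = (\<Prod>i<a. y i)"
  proof -
    have "0 < (\<Prod>i<a. y i)" by (simp add: y_def prod_pos)
    then show ?thesis using assms(2) by (simp add: powr_inverse_root)
  qed
  ultimately show ?thesis
    unfolding prod by (metis power_mono powr_ge_zero)
qed

definition integer_partitions :: "nat \<Rightarrow> nat list set" where
  "integer_partitions n = {xs. sorted_wrt (\<ge>) xs \<and> (\<forall>x\<in>set xs. 1 \<le> x) \<and> sum_list xs = n}"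

lemma partition_count_eq_card: "partition_count n = card (integer_partitions n)"
  unfolding partition_count_def integer_partitions_def ..

lemma finite_integer_partitions: "finite (integer_partitions n)"
proof (rule finite_subset)
  have "length xs \<le> sum_list xs" if "\<forall>x\<in>set xs. 1 \<le> x" for xs :: "nat list"
    using that by (induction xs) auto
  then show "integer_partitions n \<subseteq> {xs. set xs \<subseteq> {..n} \<and> length xs \<le> n}"
    unfolding integer_partitions_def using member_le_sum_list by fastforce
  show "finite {xs. set xs \<subseteq> {..n} \<and> length xs \<le> n}"
    by (rule finite_lists_length_le) simp
qed

lemma partition_block_sizes:
  assumes "finite P" and "partition_on P CC"
  obtains Cs where "set Cs = CC" and "distinct Cs" and "map card Cs \<in> integer_partitions (card P)"
proof -
  obtain Cs0 where Cs0: "set Cs0 = CC" "distinct Cs0"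
    using finite_distinct_list[OF finite_elements[OF assms]] by blast
  define Cs where "Cs = rev (sort_key card Cs0)"
  have Cs: "set Cs = CC" "distinct Cs" using Cs0 by (simp_all add: Cs_def)
  have "sorted_wrt (\<ge>) (map card Cs)"
    using sorted_sort_key[of card Cs0] unfolding Cs_def
    by (simp add: rev_map[symmetric] sorted_wrt_rev sorted_wrt_map)
  moreover have "\<forall>x\<in>set (map card Cs). 1 \<le> x"
    using Cs(1) partition_onD3[OF assms(2)] finite_partition_member[OF assms]
    by (auto simp: Suc_le_eq card_gt_0_iff)
  moreover have "sum_list (map card Cs) = card P"
    using Cs product_partition[OF assms(2)] finite_partition_member[OF assms]
    by (simp add: sum_list_distinct_conv_sum_set)
  ultimately show ?thesis using that Cs unfolding integer_partitions_def by blast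
qed

definition universal_family :: "nat \<Rightarrow> nat \<Rightarrow> nat set set" where
  "universal_family n a = (\<Union>ls\<in>{ls \<in> integer_partitions n. length ls \<le> a}. block_family ls 0)"

lemma universal_family_subset: "universal_family n a \<subseteq> Pow {1..n}"
  using block_family_subset unfolding universal_family_def integer_partitions_def
  by (fastforce simp: atLeastSucAtMost_greaterThanAtMost)

lemma card_universal_family_le:
  assumes "0 < a"
  shows "real (card (universal_family n a)) \<le> real (partition_count n) * (real n / a + 1) ^ a"
proof -
  let ?Parts = "{ls \<in> integer_partitions n. length ls \<le> a}"
  have "finite ?Parts" using finite_integer_partitions by simp
  then have "card (universal_family n a) \<le> (\<Sum>ls\<in>?Parts. card (block_family ls 0))"
    unfolding universal_family_def by (rule card_UN_le)
  then have "real (card (universal_family n a)) \<le> (\<Sum>ls\<in>?Parts. real (card (block_family ls 0)))"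
    by (simp flip: of_nat_sum)
  also have "\<dots> \<le> (\<Sum>ls\<in>?Parts. (real n / a + 1) ^ a)"
  proof (rule sum_mono)
    fix ls assume ls: "ls \<in> ?Parts"
    have "real (card (block_family ls 0)) \<le> real (\<Prod>l\<leftarrow>ls. Suc l)"
      using card_block_family_le by simp
    also have "\<dots> \<le> (real (sum_list ls) / a + 1) ^ a"
      using ls assms by (intro prod_Suc_le_mean_power) auto
    finally show "real (card (block_family ls 0)) \<le> (real n / a + 1) ^ a"
      using ls unfolding integer_partitions_def by simp
  qed
  also have "\<dots> \<le> real (partition_count n) * (real n / a + 1) ^ a"
  proof -
    have "card ?Parts \<le> partition_count n"
      unfolding partition_count_eq_card by (rule card_mono) (auto simp: finite_integer_partitions)
    then show ?thesis by (simp add: mult_right_mono)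
  qed
  finally show ?thesis .
qed

lemma contains_poset_universal_family:
  assumes "finite P" and po: "partial_order_on P r"
    and width: "\<forall>A. is_antichain P r A \<longrightarrow> card A \<le> a"
  shows "contains_poset (universal_family (card P) a) P r"
proof -
  obtain CC where CC: "partition_on P CC" "CC \<subseteq> Chains r" "card CC \<le> a"
    using dilworth[OF po assms(1) subset_refl width] by blast
  obtain Cs where Cs: "set Cs = CC" "distinct Cs" "map card Cs \<in> integer_partitions (card P)"
    using partition_block_sizes[OF assms(1) CC(1)] by blast
  txt \<open>A point is coded by how many elements of each chain lie below it.\<close>
  define f where "f x = block_union 0 (map card Cs) (map (\<lambda>C. card (C \<inter> under r x)) Cs)" for x
  have "length (map card Cs) \<le> a" using Cs(1,2) CC(3) distinct_card by fastforce
  then have "block_family (map card Cs) 0 \<subseteq> universal_family (card P) a"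
    using Cs(3) unfolding universal_family_def by blast
  moreover have "f x \<in> block_family (map card Cs) 0" for x
    unfolding f_def using finite_partition_member[OF assms(1) CC(1)] Cs(1)
    by (intro block_union_in_block_family) (auto simp: list.rel_map list_all2_same card_mono)
  moreover have "(x, y) \<in> r \<longleftrightarrow> f x \<subseteq> f y" if "x \<in> P" "y \<in> P" for x y
  proof -
    have "f x \<subseteq> f y \<longleftrightarrow> (\<forall>C\<in>CC. card (C \<inter> under r x) \<le> card (C \<inter> under r y))"
      unfolding f_def using finite_partition_member[OF assms(1) CC(1)] Cs(1)
      by (subst block_union_subset_iff) (auto simp: list.rel_map list_all2_same card_mono)
    also have "\<dots> \<longleftrightarrow> (x, y) \<in> r"
      using chain_partition_under_card_le_iff[OF po CC(1,2) assms(1) subset_refl that] .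
    finally show ?thesis by simp
  qed
  moreover have "antisym r" using po by (auto dest: partial_order_onD)
  ultimately show ?thesis by (intro contains_posetI[where f = f]) blast+
qed

theorem lemma3p1:
  fixes a n :: nat
  assumes "1 \<le> a" and "a \<le> n"
  shows "\<exists>S :: nat set set. S \<subseteq> Pow {1..n} \<and>
     real (card S) \<le> real (partition_count n) * real a * (real n / real a + 1) ^ a \<and>
     (\<forall>(P :: nat set) (r :: (nat \<times> nat) set).
        card P = n \<and> partial_order_on P r \<and>
        \<not> (\<exists>A. is_antichain P r A \<and> card A = a + 1)
        \<longrightarrow> contains_poset S P r)"
proof (intro exI conjI)
  show "universal_family n a \<subseteq> Pow {1..n}" by (rule universal_family_subset)
  have "real (card (universal_family n a)) \<le> real (partition_count n) * (real n / a + 1) ^ a"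
    using assms(1) by (intro card_universal_family_le) simp
  also have "\<dots> \<le> real (partition_count n) * real a * (real n / real a + 1) ^ a"
    using assms(1) by (intro mult_right_mono) (simp_all add: mult_le_cancel_left1)
  finally show "real (card (universal_family n a)) \<le> \<dots>" .
  show "\<forall>(P :: nat set) r. card P = n \<and> partial_order_on P r \<and> \<not> (\<exists>A. is_antichain P r A \<and> card A = a + 1)
      \<longrightarrow> contains_poset (universal_family n a) P r"
  proof (intro allI impI, elim conjE)
    fix P :: "nat set" and r
    assume P: "card P = n" and po: "partial_order_on P r"
      and no_large: "\<not> (\<exists>A. is_antichain P r A \<and> card A = a + 1)"
    have "finite P" using P assms by (intro card_ge_0_finite) simp
    moreover have "\<forall>A. is_antichain P r A \<longrightarrow> card A \<le> a"
      using no_large by (simp add: antichains_card_le_iff)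
    ultimately show "contains_poset (universal_family n a) P r"
      using contains_poset_universal_family[OF _ po] P by blast
  qed
qed

end
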